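(* Let $\mathcal L_D=\mathcal L(0,\{D_k\})$ be a purely dissipative Lindblad generator on finite-dimensional $\mathcal H$ such that the pure state $\rho_d$ is conditionally asymptotically stable relative to a subspace $\mathcal H''$. Then there exists a subspace $\mathcal H'\supseteq\mathcal H''$ such that $\mathfrak D(\mathcal H')$ is invariant under $e^{\mathcal L_Dt}$ for all $t\ge0$ and $\rho_d$ is conditionally asymptotically stable relative to $\mathcal H'$ for $\mathcal L_D$. (Explicitly, one may take $\mathcal H'$ to be the smallest subspace containing $\mathrm{supp}(e^{\mathcal L_Dt}(\rho_0))$ for all $t\ge0$ and all $\rho_0\in\mathfrak D(\mathcal H'')$.)
   Context: $\mathfrak D(\mathcal K)$ denotes the set of density operators with support contained in the subspace $\mathcal K$. $\mathcal L(0,\{D_k\})(\rho)=\sum_k(D_k\rho D_k^\dagger-\frac12\{D_k^\dagger D_k,\rho\})$. Conditional asymptotic stability relative to $\mathcal K$: $e^{\mathcal L_Dt}(\rho_0)\to\rho_d$ as $t\to\infty$ for all $\rho_0\in\mathfrak D(\mathcal K)$. *)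

theory Defs
  imports "HOL-Analysis.Analysis"
begin

text \<open>Operators on the finite-dimensional Hilbert space H = complex^'n are
  complex matrices of type complex^'n^'n.\<close>

type_synonym 'n cmat = "complex^'n^'n"

definition adjoint :: "'n::finite cmat \<Rightarrow> 'n cmat" where
  "adjoint A = (\<chi> i j. cnj (A $ j $ i))"

definition cinner :: "complex^'n::finite \<Rightarrow> complex^'n \<Rightarrow> complex" where
  "cinner x y = (\<Sum>i\<in>UNIV. cnj (x $ i) * y $ i)"

definition csubspace :: "(complex^'n::finite) set \<Rightarrow> bool" where
  "csubspace K \<longleftrightarrow> 0 \<in> K \<and> (\<forall>x\<in>K. \<forall>y\<in>K. x + y \<in> K) \<and> (\<forall>c. \<forall>x\<in>K. c *s x \<in> K)"

definition psd :: "'n::finite cmat \<Rightarrow> bool" where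
  "psd A \<longleftrightarrow> (\<forall>x. Im (cinner x (A *v x)) = 0 \<and> Re (cinner x (A *v x)) \<ge> 0)"

definition density :: "'n::finite cmat \<Rightarrow> bool" where
  "density \<rho> \<longleftrightarrow> psd \<rho> \<and> trace \<rho> = 1"

text \<open>Support of an operator (for Hermitian operators, the range).\<close>
definition supp :: "'n::finite cmat \<Rightarrow> (complex^'n) set" where
  "supp A = range (\<lambda>x. A *v x)"

definition densities :: "(complex^'n::finite) set \<Rightarrow> 'n cmat set" where
  "densities K = {\<rho>. density \<rho> \<and> supp \<rho> \<subseteq> K}"

definition outer :: "complex^'n::finite \<Rightarrow> complex^'n \<Rightarrow> 'n cmat" where
  "outer x y = (\<chi> i j. x $ i * cnj (y $ j))"

definition pure_state :: "'n::finite cmat \<Rightarrow> bool" where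
  "pure_state \<rho> \<longleftrightarrow> (\<exists>\<psi>. cinner \<psi> \<psi> = 1 \<and> \<rho> = outer \<psi> \<psi>)"

definition lindblad_D :: "'n::finite cmat list \<Rightarrow> 'n cmat \<Rightarrow> 'n cmat" where
  "lindblad_D Ds \<rho> = (\<Sum>D\<leftarrow>Ds. D ** \<rho> ** adjoint D
      - (1/2::real) *\<^sub>R ((adjoint D ** D) ** \<rho> + \<rho> ** (adjoint D ** D)))"

definition evol :: "('n::finite cmat \<Rightarrow> 'n cmat) \<Rightarrow> real \<Rightarrow> 'n cmat \<Rightarrow> 'n cmat" where
  "evol L t \<rho> = (\<Sum>k. (t ^ k / fact k) *\<^sub>R (L ^^ k) \<rho>)"

definition cond_asymp_stable :: "('n::finite cmat \<Rightarrow> 'n cmat) \<Rightarrow> 'n cmat \<Rightarrow> (complex^'n) set \<Rightarrow> bool" where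
  "cond_asymp_stable L \<rho>d K \<longleftrightarrow>
     (\<forall>\<rho>0 \<in> densities K. ((\<lambda>t. evol L t \<rho>0) \<longlongrightarrow> \<rho>d) at_top)"

definition invariant_densities :: "('n::finite cmat \<Rightarrow> 'n cmat) \<Rightarrow> (complex^'n) set \<Rightarrow> bool" where
  "invariant_densities L K \<longleftrightarrow> (\<forall>\<rho>\<in>densities K. \<forall>t\<ge>0. evol L t \<rho> \<in> densities K)"

end

theory Submission
  imports Defs
begin

text \<open>Let \<open>N\<close> be the common kernel of all states \<open>e\<^sup>L\<^sup>t \<rho>\<^sub>0\<close> with \<open>t \<ge> 0\<close> and
  \<open>\<rho>\<^sub>0 \<in> \<frak>D(H'')\<close>, and let \<open>H'\<close> be its orthogonal complement, the span of their supports.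
  Finite sums of such states form a cone that the evolution maps into itself; a sum \<open>\<omega>\<close> in it of
  least kernel dimension has kernel exactly \<open>N\<close>, so every density \<open>\<sigma>\<close> supported in \<open>H'\<close>
  satisfies \<open>\<sigma> \<le> c \<omega>\<close> for some \<open>c\<close>. The evolution is positive, hence
  \<open>e\<^sup>L\<^sup>t \<sigma> \<le> c e\<^sup>L\<^sup>t \<omega>\<close>; the right-hand side vanishes on \<open>N\<close>, which gives invariance of \<open>\<frak>D(H')\<close>.
  Moreover \<open>e\<^sup>L\<^sup>t \<omega>\<close> tends to a multiple of \<open>\<rho>\<^sub>d = |\<psi>\<rangle>\<langle>\<psi>|\<close>, so the quadratic form of
  \<open>e\<^sup>L\<^sup>t \<sigma>\<close> vanishes asymptotically on \<open>\<psi>\<^sup>\<bottom>\<close>; by Cauchy-Schwarz and trace preservation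
  \<open>e\<^sup>L\<^sup>t \<sigma> \<longrightarrow> \<rho>\<^sub>d\<close>.\<close>

section \<open>The Banach algebra of bounded operators\<close>

text \<open>A copy of \<open>'a \<Rightarrow>\<^sub>L 'a\<close> carrying the Banach algebra structure with composition as
  product, which the library does not provide; it makes \<open>exp\<close> available for superoperators.\<close>

typedef (overloaded) 'a sop = "UNIV :: ('a::euclidean_space \<Rightarrow>\<^sub>L 'a) set"
  morphisms sop_rep sop_abs by auto

setup_lifting type_definition_sop

instantiation sop :: (euclidean_space) real_normed_vector
begin
lift_definition norm_sop :: "'a sop \<Rightarrow> real" is norm .
lift_definition minus_sop :: "'a sop \<Rightarrow> 'a sop \<Rightarrow> 'a sop" is "(-)" .
lift_definition plus_sop :: "'a sop \<Rightarrow> 'a sop \<Rightarrow> 'a sop" is "(+)" .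
lift_definition uminus_sop :: "'a sop \<Rightarrow> 'a sop" is "uminus" .
lift_definition zero_sop :: "'a sop" is "0" .
lift_definition scaleR_sop :: "real \<Rightarrow> 'a sop \<Rightarrow> 'a sop" is "scaleR" .
definition dist_sop :: "'a sop \<Rightarrow> 'a sop \<Rightarrow> real" where "dist_sop a b = norm (a - b)"
definition uniformity_sop :: "('a sop \<times> 'a sop) filter" where
  "uniformity_sop = (INF e\<in>{0 <..}. principal {(x, y). dist x y < e})"
definition open_sop :: "'a sop set \<Rightarrow> bool" where
  "open_sop S = (\<forall>x\<in>S. \<forall>\<^sub>F (x', y) in uniformity. x' = x \<longrightarrow> y \<in> S)"
definition sgn_sop :: "'a sop \<Rightarrow> 'a sop" where "sgn_sop x = inverse (norm x) *\<^sub>R x"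
instance
  by standard
    (unfold dist_sop_def open_sop_def sgn_sop_def uniformity_sop_def,
     (rule refl | (transfer, force simp: norm_triangle_ineq algebra_simps))+)
end

instantiation sop :: (euclidean_space) real_normed_algebra_1
begin
lift_definition times_sop :: "'a sop \<Rightarrow> 'a sop \<Rightarrow> 'a sop" is "blinfun_compose" .
lift_definition one_sop :: "'a sop" is "id_blinfun" .
instance
proof standard
  show "(0::'a sop) \<noteq> 1"
  proof transfer
    obtain b :: 'a where "b \<in> Basis" using nonempty_Basis by blast
    then show "(0::'a \<Rightarrow>\<^sub>L 'a) \<noteq> id_blinfun"
      by (metis blinfun_apply_id_blinfun blinfun.zero_left nonzero_Basis)
  qed
qed (transfer; auto intro!: blinfun_eqI simp: blinfun.bilinear_simps norm_blinfun_compose)+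
end

lemma norm_sop_rep: "norm X = norm (sop_rep X)"
  by transfer simp

lemma sop_rep_diff: "sop_rep (X - Y) = sop_rep X - sop_rep Y"
  by transfer simp

instance sop :: (euclidean_space) banach
proof
  fix X :: "nat \<Rightarrow> 'a sop"
  assume "Cauchy X"
  then have "Cauchy (\<lambda>n. sop_rep (X n))"
    unfolding Cauchy_def dist_sop_def dist_norm norm_sop_rep sop_rep_diff .
  then obtain l where "(\<lambda>n. sop_rep (X n)) \<longlonglongrightarrow> l"
    using Cauchy_convergent_iff convergent_def by blast
  then have "X \<longlonglongrightarrow> sop_abs l"
    unfolding LIMSEQ_iff norm_sop_rep sop_rep_diff by (simp add: sop_abs_inverse)
  then show "convergent X"
    by (auto simp: convergent_def)
qed

definition sop_apply :: "'a::euclidean_space sop \<Rightarrow> 'a \<Rightarrow> 'a" where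
  "sop_apply X = blinfun_apply (sop_rep X)"

definition sop_of_fun :: "('a::euclidean_space \<Rightarrow> 'a) \<Rightarrow> 'a sop" where
  "sop_of_fun f = sop_abs (Blinfun f)"

lemma sop_apply_sop_of_fun: "bounded_linear f \<Longrightarrow> sop_apply (sop_of_fun f) = f"
  by (simp add: sop_apply_def sop_of_fun_def sop_abs_inverse bounded_linear_Blinfun_apply)

lemma sop_apply_mult: "sop_apply (X * Y) v = sop_apply X (sop_apply Y v)"
  unfolding sop_apply_def by transfer simp

lemma sop_apply_one: "sop_apply 1 v = v"
  unfolding sop_apply_def by transfer simp

lemma sop_apply_add: "sop_apply (X + Y) v = sop_apply X v + sop_apply Y v"
  unfolding sop_apply_def by transfer (simp add: blinfun.bilinear_simps)

lemma sop_apply_scaleR: "sop_apply (r *\<^sub>R X) v = r *\<^sub>R sop_apply X v"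
  unfolding sop_apply_def by transfer (simp add: blinfun.bilinear_simps)

lemma sop_apply_power: "sop_apply (X ^ k) v = (sop_apply X ^^ k) v"
  by (induction k arbitrary: v) (simp_all add: sop_apply_one sop_apply_mult)

lemma bounded_linear_sop_apply_left: "bounded_linear (\<lambda>X. sop_apply X v)"
proof (rule bounded_linear_intro[where K = "norm v"])
  show "norm (sop_apply X v) \<le> norm X * norm v" for X
    unfolding sop_apply_def norm_sop_rep by (rule norm_blinfun)
qed (simp_all add: sop_apply_add sop_apply_scaleR)

lemma linear_sop_apply: "linear (sop_apply X)"
  unfolding sop_apply_def by (rule bounded_linear.linear[OF blinfun.bounded_linear_right])


section \<open>A product formula for the exponential\<close>

lemma exp_real_series: "exp (r::real) = (\<Sum>n. r ^ n / fact n)"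
  by (simp add: exp_def divide_inverse mult.commute)

lemma summable_exp_real: "summable (\<lambda>n. (r::real) ^ n / fact n)"
  using summable_exp_generic[of r] by (simp add: divide_inverse mult.commute)

lemma norm_power_diff_le:
  fixes X Y :: "'a::real_normed_algebra_1"
  assumes "norm X \<le> M" "norm Y \<le> M" "1 \<le> M"
  shows "norm (X ^ n - Y ^ n) \<le> real n * M ^ n * norm (X - Y)"
proof (induction n)
  case (Suc n)
  have "norm (Y ^ n) \<le> M ^ n"
    using norm_power_ineq[of Y n] power_mono[OF assms(2) norm_ge_zero, of n] by linarith
  then have "norm ((X - Y) * Y ^ n) \<le> norm (X - Y) * M ^ n"
    by (meson mult_left_mono norm_ge_zero norm_mult_ineq order_trans)
  moreover have "norm (X * (X ^ n - Y ^ n)) \<le> M * (real n * M ^ n * norm (X - Y))"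
    using norm_mult_ineq[of X "X ^ n - Y ^ n"] Suc assms
    by (meson mult_mono norm_ge_zero order_trans)
  moreover have "X ^ Suc n - Y ^ Suc n = X * (X ^ n - Y ^ n) + (X - Y) * Y ^ n"
    by (simp add: algebra_simps)
  moreover have "M ^ n \<le> M ^ Suc n"
    using assms(3) by simp
  ultimately have "norm (X ^ Suc n - Y ^ Suc n)
      \<le> M * (real n * M ^ n * norm (X - Y)) + norm (X - Y) * M ^ Suc n"
    using norm_triangle_ineq[of "X * (X ^ n - Y ^ n)" "(X - Y) * Y ^ n"]
    by (smt (verit) mult_left_mono norm_ge_zero)
  then show ?case
    by (simp add: algebra_simps)
qed simp

lemma norm_exp_minus_one_minus_le:
  fixes b :: "'a::{real_normed_algebra_1,banach}"
  shows "norm (exp b - 1 - b) \<le> norm b ^ 2 * exp (norm b)"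
proof -
  define f where "f n = inverse (fact (n + 2)) *\<^sub>R b ^ (n + 2)" for n
  define g where "g n = norm b ^ 2 * (norm b ^ n / fact n)" for n
  have fg: "norm (f n) \<le> g n" for n
  proof -
    have "norm (f n) \<le> inverse (fact (n + 2)) * norm b ^ (n + 2)"
      unfolding f_def using norm_power_ineq[of b "n + 2"] by (simp add: mult_left_mono)
    also have "\<dots> \<le> inverse (fact n) * norm b ^ (n + 2)"
    proof -
      have "fact n \<le> (fact (n + 2) :: real)"
        by (rule fact_mono) simp
      then show ?thesis
        by (intro mult_right_mono le_imp_inverse_le) auto
    qed
    also have "\<dots> = g n"
      by (simp add: g_def power_add field_simps power2_eq_square)
    finally show ?thesis .
  qed
  have sg: "summable g"
    unfolding g_def by (intro summable_mult summable_exp_real)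
  have sf: "summable (\<lambda>n. norm (f n))"
    by (rule summable_comparison_test[OF _ sg]) (use fg in auto)
  have "norm (exp b - 1 - b) = norm (suminf f)"
    using exp_first_two_terms[of b] unfolding f_def by simp
  also have "\<dots> \<le> (\<Sum>n. norm (f n))"
    by (rule summable_norm[OF sf])
  also have "\<dots> \<le> suminf g"
    by (rule suminf_le[OF fg sf sg])
  also have "\<dots> = norm b ^ 2 * exp (norm b)"
    unfolding g_def exp_real_series[of "norm b"] by (rule suminf_mult) (rule summable_exp_real)
  finally show ?thesis .
qed

lemma norm_exp_diff_le:
  fixes x y :: "'a::{real_normed_algebra_1,banach}"
  shows "norm (exp y - exp x) \<le> norm (y - x) * exp (2 * (1 + norm x + norm y))"
proof -
  define M where "M = 1 + norm x + norm y"
  define f where "f n = (y ^ n - x ^ n) /\<^sub>R fact n" for n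
  define g where "g n = norm (y - x) * ((2 * M) ^ n / fact n)" for n
  have fg: "norm (f n) \<le> g n" for n
  proof -
    have "real n \<le> 2 ^ n"
      by (metis less_exp less_imp_le of_nat_le_iff of_nat_numeral of_nat_power)
    then have "real n * M ^ n * norm (y - x) \<le> 2 ^ n * M ^ n * norm (y - x)"
      by (intro mult_right_mono) (auto simp: M_def)
    with norm_power_diff_le[of y M x n] have "norm (y ^ n - x ^ n) \<le> 2 ^ n * M ^ n * norm (y - x)"
      by (simp add: M_def)
    then have "norm (y ^ n - x ^ n) \<le> norm (y - x) * (2 * M) ^ n"
      by (simp add: power_mult_distrib algebra_simps)
    then show ?thesis
      by (simp add: f_def g_def divide_right_mono inverse_eq_divide mult.commute[of "inverse _"]
          power_mult_distrib)
  qed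
  have sg: "summable g"
    unfolding g_def by (intro summable_mult summable_exp_real)
  have sf: "summable (\<lambda>n. norm (f n))"
    by (rule summable_comparison_test[OF _ sg]) (use fg in auto)
  have "exp y - exp x = suminf f"
    unfolding exp_def f_def
    by (simp add: suminf_diff[OF summable_exp_generic summable_exp_generic, symmetric] scaleR_diff_right)
  then have "norm (exp y - exp x) \<le> (\<Sum>n. norm (f n))"
    using summable_norm[OF sf] by simp
  also have "\<dots> \<le> suminf g"
    by (rule suminf_le[OF fg sf sg])
  also have "\<dots> = norm (y - x) * exp (2 * M)"
    unfolding g_def exp_real_series[of "2 * M"] by (rule suminf_mult) (rule summable_exp_real)
  finally show ?thesis
    by (simp add: M_def)
qed

lemma tendsto_exp_banach:
  fixes a :: "'b \<Rightarrow> 'a::{real_normed_algebra_1,banach}"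
  assumes "(a \<longlongrightarrow> A) F"
  shows "((\<lambda>n. exp (a n)) \<longlongrightarrow> exp A) F"
proof -
  have "\<forall>\<^sub>F n in F. norm (a n) < norm A + 1"
    using order_tendstoD(2)[OF tendsto_norm[OF assms]] by simp
  then have "\<forall>\<^sub>F n in F. norm (exp (a n) - exp A) \<le> norm (a n - A) * exp (2 * (2 + 2 * norm A))"
  proof eventually_elim
    case (elim n)
    have "norm (exp (a n) - exp A) \<le> norm (a n - A) * exp (2 * (1 + norm A + norm (a n)))"
      by (rule norm_exp_diff_le)
    also have "\<dots> \<le> norm (a n - A) * exp (2 * (2 + 2 * norm A))"
      using elim by (intro mult_left_mono) auto
    finally show ?case .
  qed
  moreover have "((\<lambda>n. norm (a n - A) * exp (2 * (2 + 2 * norm A))) \<longlongrightarrow> 0) F"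
    using assms by (intro tendsto_mult_left_zero) (simp add: tendsto_norm_zero_iff LIM_zero)
  ultimately have "((\<lambda>n. exp (a n) - exp A) \<longlongrightarrow> 0) F"
    by (rule Lim_null_comparison)
  then show ?thesis
    by (simp add: LIM_zero_iff)
qed

lemma exp_scaleR_of_nat:
  fixes x :: "'a::{real_normed_algebra_1,banach}"
  shows "exp (real n *\<^sub>R x) = exp x ^ n"
proof (induction n)
  case (Suc n)
  have "exp (real (Suc n) *\<^sub>R x) = exp (x + real n *\<^sub>R x)"
    by (simp add: algebra_simps)
  also have "\<dots> = exp x * exp (real n *\<^sub>R x)"
    by (rule exp_add_commuting) (simp add: algebra_simps)
  finally show ?case
    using Suc by simp
qed simp

lemma norm_one_plus_power_minus_exp_le:
  fixes b :: "'a::{real_normed_algebra_1,banach}"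
  shows "norm ((1 + b) ^ n - exp (real n *\<^sub>R b)) \<le> real n * norm b ^ 2 * exp (real (Suc n) * norm b)"
proof -
  define M where "M = exp (norm b)"
  have "norm (1 + b) \<le> M"
    using norm_triangle_ineq[of 1 b] exp_ge_add_one_self[of "norm b"]
    by (simp add: M_def del: exp_ge_add_one_self)
  moreover have "norm (exp b) \<le> M"
    unfolding M_def by (rule norm_exp)
  ultimately have "norm ((1 + b) ^ n - exp b ^ n) \<le> real n * M ^ n * norm (1 + b - exp b)"
    by (rule norm_power_diff_le) (simp add: M_def)
  also have "norm (1 + b - exp b) = norm (exp b - 1 - b)"
    by (metis minus_diff_eq norm_minus_cancel diff_diff_eq2 add.commute)
  also have "real n * M ^ n * norm (exp b - 1 - b) \<le> real n * M ^ n * (norm b ^ 2 * M)"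
    using norm_exp_minus_one_minus_le[of b] by (intro mult_left_mono) (auto simp: M_def)
  also have "\<dots> = real n * norm b ^ 2 * exp (real (Suc n) * norm b)"
    by (simp add: M_def exp_of_nat_mult[symmetric] exp_add[symmetric] algebra_simps)
  finally show ?thesis
    by (simp add: exp_scaleR_of_nat)
qed

lemma tendsto_one_plus_div_power_exp:
  fixes a :: "nat \<Rightarrow> 'a::{real_normed_algebra_1,banach}"
  assumes lim: "a \<longlonglongrightarrow> A"
  shows "(\<lambda>n. (1 + a n /\<^sub>R real n) ^ n) \<longlonglongrightarrow> exp A"
proof -
  obtain C where C: "C > 0" "\<And>n. norm (a n) \<le> C"
    using lim by (metis BseqE convergent_def convergent_imp_Bseq)
  have bound: "norm ((1 + a n /\<^sub>R real n) ^ n - exp (a n)) \<le> C ^ 2 * exp (2 * C) / real n"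
    if n: "n > 0" for n
  proof -
    have nb: "norm (a n /\<^sub>R real n) = norm (a n) / real n"
      by (simp add: divide_inverse mult.commute)
    have "norm ((1 + a n /\<^sub>R real n) ^ n - exp (a n))
        \<le> real n * (norm (a n) / real n) ^ 2 * exp (real (Suc n) * (norm (a n) / real n))"
      using norm_one_plus_power_minus_exp_le[of "a n /\<^sub>R real n" n] n by (simp only: nb) simp
    also have "\<dots> = norm (a n) ^ 2 / real n * exp ((1 + 1 / real n) * norm (a n))"
      using n by (simp add: power2_eq_square field_simps)
    also have "\<dots> \<le> C ^ 2 / real n * exp (2 * C)"
    proof (intro mult_mono divide_right_mono power_mono)
      have "(1 + 1 / real n) * norm (a n) \<le> 2 * C"
        using n C(2)[of n] by (intro mult_mono) (auto simp: field_simps)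
      then show "exp ((1 + 1 / real n) * norm (a n)) \<le> exp (2 * C)"
        by simp
    qed (use C(2) in auto)
    finally show ?thesis
      by simp
  qed
  have "(\<lambda>n. (1 + a n /\<^sub>R real n) ^ n - exp (a n)) \<longlonglongrightarrow> 0"
  proof (rule Lim_null_comparison)
    show "\<forall>\<^sub>F n in sequentially. norm ((1 + a n /\<^sub>R real n) ^ n - exp (a n)) \<le> C ^ 2 * exp (2 * C) / real n"
      using eventually_gt_at_top[of 0] by (rule eventually_mono) (rule bound)
  qed (rule lim_const_over_n)
  from tendsto_add[OF this tendsto_exp_banach[OF lim]] show ?thesis
    by simp
qed


section \<open>Matrices and the sesquilinear form\<close>

lemma scaleR_complex: "r *\<^sub>R (z::complex) = of_real r * z"
  by (rule scaleR_conv_of_real)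

lemma matrix_add_rdistrib: "((A::'n::finite cmat) + B) ** C = A ** C + B ** C"
  by (simp add: vec_eq_iff matrix_matrix_mult_def sum.distrib distrib_right)

lemma matrix_diff_rdistrib: "((A::'n::finite cmat) - B) ** C = A ** C - B ** C"
  by (simp add: vec_eq_iff matrix_matrix_mult_def sum_subtractf left_diff_distrib)

lemma matrix_diff_ldistrib: "(A::'n::finite cmat) ** (B - C) = A ** B - A ** C"
  by (simp add: vec_eq_iff matrix_matrix_mult_def sum_subtractf right_diff_distrib)

lemma matrix_scaleR_mult_left: "(r *\<^sub>R (A::'n::finite cmat)) ** B = r *\<^sub>R (A ** B)"
  by (rule scalar_matrix_assoc[symmetric])

lemma matrix_scaleR_mult_right: "(A::'n::finite cmat) ** (r *\<^sub>R B) = r *\<^sub>R (A ** B)"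
  by (simp add: matrix_scalar_ac scalar_matrix_assoc)

lemma matrix_scaleR_mv: "(r *\<^sub>R (A::'n::finite cmat)) *v x = r *\<^sub>R (A *v x)"
  by (simp add: vec_eq_iff matrix_vector_mult_def sum_distrib_left vector_scaleR_component scaleR_complex mult.assoc)

lemma matrix_mv_scaleR: "(A::'n::finite cmat) *v (r *\<^sub>R x) = r *\<^sub>R (A *v x)"
  by (simp add: vec_eq_iff matrix_vector_mult_def sum_distrib_left vector_scaleR_component scaleR_complex mult.left_commute)

lemma matrix_mv_smult: "(A::'n::finite cmat) *v (c *s x) = c *s (A *v x)"
  by (simp add: vec_eq_iff matrix_vector_mult_def sum_distrib_left mult.left_commute)

lemma trace_scaleR: "trace (r *\<^sub>R (A::'n::finite cmat)) = of_real r * trace A"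
  by (simp add: trace_def sum_distrib_left vector_scaleR_component scaleR_complex)

lemma adjoint_mult: "adjoint ((A::'n::finite cmat) ** B) = adjoint B ** adjoint A"
  by (simp add: vec_eq_iff adjoint_def matrix_matrix_mult_def mult.commute)

lemma adjoint_add: "adjoint ((A::'n::finite cmat) + B) = adjoint A + adjoint B"
  by (simp add: vec_eq_iff adjoint_def)

lemma adjoint_scaleR: "adjoint (r *\<^sub>R (A::'n::finite cmat)) = r *\<^sub>R adjoint A"
  by (simp add: vec_eq_iff adjoint_def vector_scaleR_component scaleR_complex)

lemma adjoint_adjoint [simp]: "adjoint (adjoint (A::'n::finite cmat)) = A"
  by (simp add: vec_eq_iff adjoint_def)

lemma adjoint_0 [simp]: "adjoint (0::'n::finite cmat) = 0"
  by (simp add: vec_eq_iff adjoint_def)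

lemma adjoint_mat1 [simp]: "adjoint (mat 1 :: 'n::finite cmat) = mat 1"
  by (simp add: vec_eq_iff adjoint_def mat_def)

lemma cinner_add_right: "cinner x (y + z) = cinner x y + cinner x z"
  by (simp add: cinner_def sum.distrib distrib_left)

lemma cinner_add_left: "cinner (x + y) z = cinner x z + cinner y z"
  by (simp add: cinner_def sum.distrib distrib_right)

lemma cinner_diff_right: "cinner x (y - z) = cinner x y - cinner x z"
  by (simp add: cinner_def sum_subtractf right_diff_distrib)

lemma cinner_smult_right: "cinner x (c *s y) = c * cinner x y"
  by (simp add: cinner_def sum_distrib_left mult.left_commute)

lemma cinner_smult_left: "cinner (c *s x) y = cnj c * cinner x y"
  by (simp add: cinner_def sum_distrib_left mult.assoc)

lemma cinner_scaleR_right: "cinner x (r *\<^sub>R y) = of_real r * cinner x y"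
  by (simp add: cinner_def sum_distrib_left vector_scaleR_component scaleR_complex mult.left_commute)

lemma cinner_scaleR_left: "cinner (r *\<^sub>R x) y = of_real r * cinner x y"
  by (simp add: cinner_def sum_distrib_left vector_scaleR_component scaleR_complex mult.assoc)

lemma cinner_zero_right [simp]: "cinner x 0 = 0"
  by (simp add: cinner_def)

lemma cnj_cinner: "cnj (cinner x y) = cinner y x"
  by (simp add: cinner_def mult.commute)

lemma cinner_adjoint: "cinner x ((A::'n::finite cmat) *v y) = cinner (adjoint A *v x) y"
proof -
  have "cinner x (A *v y) = (\<Sum>i\<in>UNIV. \<Sum>j\<in>UNIV. cnj (x $ i) * (A $ i $ j * y $ j))"
    by (simp add: cinner_def matrix_vector_mult_def sum_distrib_left)
  also have "\<dots> = (\<Sum>j\<in>UNIV. \<Sum>i\<in>UNIV. cnj (x $ i) * (A $ i $ j * y $ j))"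
    by (rule sum.swap)
  also have "\<dots> = cinner (adjoint A *v x) y"
    by (simp add: cinner_def adjoint_def matrix_vector_mult_def sum_distrib_right
        sum_distrib_left mult_ac)
  finally show ?thesis .
qed

lemma cinner_self: "cinner x x = of_real ((norm x)\<^sup>2)"
proof -
  have "(norm x)\<^sup>2 = (\<Sum>i\<in>UNIV. (norm (x $ i))\<^sup>2)"
    by (simp add: norm_vec_def L2_set_def sum_nonneg)
  then show ?thesis
    by (simp add: cinner_def mult.commute complex_norm_square[symmetric])
qed

lemma cinner_self_eq_0_iff [simp]: "cinner x x = 0 \<longleftrightarrow> x = 0"
  by (simp add: cinner_self)

lemma inner_vec_eq_Re_cinner: "inner x y = Re (cinner x (y::complex^'n::finite))"
  by (simp add: inner_vec_def cinner_def inner_complex_def Re_sum)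

lemma cinner_axis_right: "cinner x (axis i 1) = cnj (x $ i)"
  by (simp add: cinner_def axis_def if_distrib if_distribR cong: if_cong)

lemma cinner_axis_mv_axis: "cinner (axis i 1) ((A::'n::finite cmat) *v axis j 1) = A $ i $ j"
  by (simp add: cinner_def matrix_vector_mult_def axis_def if_distrib if_distribR cong: if_cong)

lemma cinner_sesquilinear_expand:
  "cinner (b *s x + u) ((A::'n::finite cmat) *v (c *s y + v)) =
     cnj b * c * cinner x (A *v y) + cnj b * cinner x (A *v v) + c * cinner u (A *v y)
     + cinner u (A *v v)"
  by (simp add: matrix_vector_right_distrib matrix_mv_smult cinner_add_left cinner_add_right
      cinner_smult_left cinner_smult_right algebra_simps)

lemma tendsto_cinner_mv:
  assumes "(f \<longlongrightarrow> (A::'n::finite cmat)) F"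
  shows "((\<lambda>t. cinner x (f t *v y)) \<longlongrightarrow> cinner x (A *v y)) F"
  unfolding cinner_def matrix_vector_mult_def by (intro tendsto_intros assms)

lemma bounded_linear_mv: "bounded_linear (\<lambda>x. (A::'n::finite cmat) *v x)"
  using matrix_vector_mul_linear linear_conv_bounded_linear by blast


section \<open>Positive semidefinite matrices\<close>

lemma cinner_quadratic_add_smult:
  "cinner (x + c *s y) ((A::'n::finite cmat) *v (x + c *s y)) =
     cinner x (A *v x) + c * cinner x (A *v y) + cnj c * cinner y (A *v x)
     + (cnj c * c) * cinner y (A *v y)"
  by (simp add: matrix_vector_right_distrib matrix_mv_smult cinner_add_left cinner_add_right
      cinner_smult_left cinner_smult_right algebra_simps)

text \<open>Polarisation: a matrix with real quadratic form is Hermitian.\<close>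

lemma psd_cinner_swap:
  assumes "psd (A::'n::finite cmat)"
  shows "cinner y (A *v x) = cnj (cinner x (A *v y))"
proof -
  have real_form: "Im (cinner z (A *v z)) = 0" for z
    using assms unfolding psd_def by blast
  from real_form[of "x + 1 *s y"] real_form[of x] real_form[of y]
  have "Im (cinner x (A *v y)) + Im (cinner y (A *v x)) = 0"
    unfolding cinner_quadratic_add_smult by simp
  moreover from real_form[of "x + \<i> *s y"] real_form[of x] real_form[of y]
  have "Re (cinner x (A *v y)) - Re (cinner y (A *v x)) = 0"
    unfolding cinner_quadratic_add_smult by simp
  ultimately show ?thesis
    by (simp add: complex_eq_iff)
qed

lemma psd_Cauchy_Schwarz:
  assumes "psd (A::'n::finite cmat)"
  shows "(cmod (cinner x (A *v y)))\<^sup>2 \<le> Re (cinner x (A *v x)) * Re (cinner y (A *v y))"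
proof -
  define X where "X = cinner x (A *v y)"
  define a where "a = Re (cinner x (A *v x))"
  define b where "b = Re (cinner y (A *v y))"
  have b0: "b \<ge> 0"
    using assms unfolding psd_def b_def by auto
  have key: "a - 2 * s * (cmod X)\<^sup>2 + s\<^sup>2 * (cmod X)\<^sup>2 * b \<ge> 0" for s :: real
  proof -
    define c where "c = - of_real s * cnj X"
    have "cinner y (A *v x) = cnj X"
      unfolding X_def by (rule psd_cinner_swap[OF assms])
    moreover have "cnj c * c = of_real (s\<^sup>2 * (cmod X)\<^sup>2)"
    proof -
      have "cmod c = \<bar>s\<bar> * cmod X"
        unfolding c_def by (simp add: norm_mult)
      then show ?thesis
        by (metis complex_norm_square mult.commute power2_abs power_mult_distrib)
    qed
    moreover have "Re (c * X) = - s * (cmod X)\<^sup>2" "Re (cnj c * cnj X) = - s * (cmod X)\<^sup>2"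
      unfolding c_def cmod_power2 by (simp_all add: power2_eq_square algebra_simps)
    ultimately have "Re (cinner (x + c *s y) (A *v (x + c *s y)))
        = a - 2 * s * (cmod X)\<^sup>2 + s\<^sup>2 * (cmod X)\<^sup>2 * b"
      unfolding cinner_quadratic_add_smult a_def b_def X_def by simp
    then show ?thesis
      using assms unfolding psd_def by metis
  qed
  show ?thesis
  proof (cases "b = 0")
    case True
    have "(cmod X)\<^sup>2 = 0"
    proof (rule ccontr)
      assume "(cmod X)\<^sup>2 \<noteq> 0"
      then have "(cmod X)\<^sup>2 > 0"
        by simp
      with key[of "(a + 1) / (2 * (cmod X)\<^sup>2)"] True show False
        by (simp add: field_simps)
    qed
    then show ?thesis
      using True unfolding X_def a_def b_def by simp
  next
    case False
    with b0 have "b > 0"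
      by simp
    with key[of "1 / b"] have "(cmod X)\<^sup>2 \<le> a * b"
      by (simp add: power2_eq_square field_simps)
    then show ?thesis
      unfolding X_def a_def b_def .
  qed
qed

lemma psd_null_vector:
  assumes "psd (A::'n::finite cmat)" "Re (cinner y (A *v y)) = 0"
  shows "A *v y = 0" "cinner y (A *v z) = 0"
proof -
  have z: "cinner z (A *v y) = 0" for z
    using psd_Cauchy_Schwarz[OF assms(1), of z y] assms(2) by simp
  show "A *v y = 0"
    using z[of "A *v y"] by simp
  show "cinner y (A *v z) = 0"
    using psd_cinner_swap[OF assms(1), of y z] z[of z] by simp
qed

lemma psd_add: "psd A \<Longrightarrow> psd B \<Longrightarrow> psd ((A::'n::finite cmat) + B)"
  unfolding psd_def by (simp add: matrix_vector_mult_add_rdistrib cinner_add_right)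

lemma psd_scaleR: "psd A \<Longrightarrow> r \<ge> 0 \<Longrightarrow> psd (r *\<^sub>R (A::'n::finite cmat))"
  unfolding psd_def by (simp add: matrix_scaleR_mv cinner_scaleR_right)

lemma psd_sum_list: "(\<And>A. A \<in> set As \<Longrightarrow> psd A) \<Longrightarrow> psd (sum_list As :: 'n::finite cmat)"
  by (induction As) (auto intro: psd_add simp: psd_def[of 0])

lemma psd_congruence:
  assumes "psd \<rho>"
  shows "psd ((X::'n::finite cmat) ** \<rho> ** adjoint X)"
proof -
  have "cinner x ((X ** \<rho> ** adjoint X) *v x) = cinner (adjoint X *v x) (\<rho> *v (adjoint X *v x))" for x
    by (simp add: matrix_vector_mul_assoc[symmetric] cinner_adjoint)
  then show ?thesis
    using assms unfolding psd_def by simp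
qed

lemma outer_mv: "outer x x *v v = cinner x v *s x"
  by (simp add: vec_eq_iff outer_def matrix_vector_mult_def cinner_def sum_distrib_left mult_ac)

lemma psd_outer: "psd (outer x x)"
proof -
  have "cinner v (outer x x *v v) = of_real ((cmod (cinner x v))\<^sup>2)" for v
    by (metis outer_mv cinner_smult_right cnj_cinner complex_norm_square mult.commute)
  then show ?thesis
    unfolding psd_def by simp
qed

lemma psd_limit:
  assumes "(f \<longlongrightarrow> (A::'n::finite cmat)) F" "F \<noteq> bot" "\<forall>\<^sub>F t in F. psd (f t)"
  shows "psd A"
  unfolding psd_def
proof
  fix x
  have l: "((\<lambda>t. cinner x (f t *v x)) \<longlongrightarrow> cinner x (A *v x)) F"
    by (rule tendsto_cinner_mv[OF assms(1)])
  have "\<forall>\<^sub>F t in F. Im (cinner x (f t *v x)) = 0"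
    using assms(3) by (rule eventually_mono) (simp add: psd_def)
  then have "((\<lambda>t. 0) \<longlongrightarrow> Im (cinner x (A *v x))) F"
    using tendsto_Im[OF l] by (rule Lim_transform_eventually[rotated])
  then have "Im (cinner x (A *v x)) = 0"
    using assms(2) tendsto_unique tendsto_const by metis
  moreover have "\<forall>\<^sub>F t in F. 0 \<le> Re (cinner x (f t *v x))"
    using assms(3) by (rule eventually_mono) (simp add: psd_def)
  then have "Re (cinner x (A *v x)) \<ge> 0"
    using tendsto_lowerbound[OF tendsto_Re[OF l]] assms(2) by blast
  ultimately show "Im (cinner x (A *v x)) = 0 \<and> 0 \<le> Re (cinner x (A *v x))"
    by simp
qed

lemma psd_kernel_add:
  assumes "psd A" "psd B"
  shows "{y. (A + B) *v y = 0} = {y. (A::'n::finite cmat) *v y = 0} \<inter> {y. B *v y = 0}"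
proof (intro equalityI subsetI)
  fix y
  assume "y \<in> {y. (A + B) *v y = 0}"
  then have "Re (cinner y (A *v y)) + Re (cinner y (B *v y)) = 0"
    unfolding mem_Collect_eq matrix_vector_mult_add_rdistrib
    by (metis cinner_add_right cinner_zero_right plus_complex.sel(1) zero_complex.sel(1))
  moreover have "Re (cinner y (A *v y)) \<ge> 0" "Re (cinner y (B *v y)) \<ge> 0"
    using assms unfolding psd_def by auto
  ultimately show "y \<in> {y. A *v y = 0} \<inter> {y. B *v y = 0}"
    using psd_null_vector(1)[OF assms(1)] psd_null_vector(1)[OF assms(2)] by auto
qed (auto simp: matrix_vector_mult_add_rdistrib)


lemma kernel_orthogonal_decomp:
  fixes A :: "'n::finite cmat"
  obtains v u where "A *v v = 0" "\<And>y. A *v y = 0 \<Longrightarrow> cinner y u = 0" "x = v + u"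
proof -
  define K where "K = {y. A *v y = 0}"
  have "subspace K"
    unfolding subspace_def K_def by (simp add: matrix_vector_right_distrib matrix_mv_scaleR)
  then have span_K: "span K = K"
    by (rule span_eq_iff[THEN iffD2])
  obtain v u where v: "v \<in> span K" and orth: "\<And>w. w \<in> span K \<Longrightarrow> orthogonal u w" and x: "x = v + u"
    using orthogonal_subspace_decomp_exists[of K x] by blast
  have "cinner y u = 0" if y: "A *v y = 0" for y
  proof -
    have "Re (cinner u y) = 0"
      using orth[of y] y span_K unfolding orthogonal_def inner_vec_eq_Re_cinner K_def by simp
    moreover have "A *v (\<i> *s y) = 0"
      using y by (simp add: matrix_mv_smult)
    then have "Re (cinner u (\<i> *s y)) = 0"
      using orth[of "\<i> *s y"] span_K unfolding orthogonal_def inner_vec_eq_Re_cinner K_def by simp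
    ultimately have "cinner u y = 0"
      by (simp add: cinner_smult_right complex_eq_iff)
    then show ?thesis
      using cnj_cinner[of u y] by simp
  qed
  then show ?thesis
    using that v x span_K unfolding K_def by blast
qed

lemma cinner_quadratic_kernel_shift:
  assumes "psd (A::'n::finite cmat)" "A *v v = 0"
  shows "cinner (v + u) (A *v (v + u)) = cinner u (A *v u)"
proof -
  have "cinner v (A *v u) = 0"
    using psd_null_vector(2)[OF assms(1)] assms(2) by simp
  then show ?thesis
    using assms(2) by (simp add: matrix_vector_right_distrib cinner_add_left cinner_add_right)
qed

lemma cinner_quadratic_scaleR:
  "cinner (r *\<^sub>R u) ((A::'n::finite cmat) *v (r *\<^sub>R u)) = of_real (r\<^sup>2) * cinner u (A *v u)"
  by (simp add: matrix_mv_scaleR cinner_scaleR_left cinner_scaleR_right power2_eq_square)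

lemma quadratic_form_ge_on_subspace:
  fixes A :: "'n::finite cmat"
  assumes "subspace C" "u \<in> C"
    and sphere: "\<And>v. v \<in> C \<Longrightarrow> norm v = 1 \<Longrightarrow> m \<le> Re (cinner v (A *v v))"
  shows "m * (norm u)\<^sup>2 \<le> Re (cinner u (A *v u))"
proof (cases "u = 0")
  case False
  have "(1 / norm u) *\<^sub>R u \<in> C"
    using assms(1,2) by (rule subspace_scale)
  with False have "m \<le> Re (cinner ((1 / norm u) *\<^sub>R u) (A *v ((1 / norm u) *\<^sub>R u)))"
    by (intro sphere) simp_all
  also have "\<dots> = (1 / norm u)\<^sup>2 * Re (cinner u (A *v u))"
    unfolding cinner_quadratic_scaleR by simp
  finally show ?thesis
    using False by (simp add: field_simps)
qed simp

text \<open>The constant is the minimum of the quadratic form on the unit sphere of the kernel's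
  orthogonal complement, attained by compactness.\<close>

lemma psd_coercive_on_kernel_complement:
  fixes \<omega> :: "'n::finite cmat"
  assumes "psd \<omega>"
  obtains l where "l > 0"
    "\<And>u. (\<And>y. \<omega> *v y = 0 \<Longrightarrow> cinner y u = 0) \<Longrightarrow> l * (norm u)\<^sup>2 \<le> Re (cinner u (\<omega> *v u))"
proof -
  define C where "C = {u. \<forall>y. \<omega> *v y = 0 \<longrightarrow> cinner y u = 0}"
  define U where "U = C \<inter> sphere 0 1"
  define f where "f u = Re (cinner u (\<omega> *v u))" for u
  have "subspace C"
    unfolding subspace_def C_def by (simp add: cinner_add_right cinner_scaleR_right)
  obtain l where l: "l > 0" "\<And>v. v \<in> U \<Longrightarrow> l \<le> f v"
  proof (cases "U = {}")
    case True
    show ?thesis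
      by (rule that[of 1]) (simp_all add: True)
  next
    case False
    have "compact U"
      unfolding U_def by (intro closed_Int_compact closed_subspace \<open>subspace C\<close> compact_sphere)
    moreover have "continuous_on U f"
      unfolding f_def inner_vec_eq_Re_cinner[symmetric]
      by (intro continuous_intros linear_continuous_on bounded_linear_mv)
    ultimately obtain u0 where u0: "u0 \<in> U" "\<And>u. u \<in> U \<Longrightarrow> f u0 \<le> f u"
      using continuous_attains_inf[OF _ False] by blast
    have "f u0 > 0"
    proof (rule ccontr)
      assume "\<not> f u0 > 0"
      moreover have "f u0 \<ge> 0"
        using assms unfolding f_def psd_def by auto
      ultimately have "\<omega> *v u0 = 0"
        using psd_null_vector(1)[OF assms] unfolding f_def by simp
      then have "cinner u0 u0 = 0"
        using u0(1) unfolding U_def C_def by auto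
      then show False
        using u0(1) unfolding U_def by simp
    qed
    with u0 show ?thesis
      by (intro that[of "f u0"]) auto
  qed
  show ?thesis
  proof (rule that[OF l(1)])
    show "l * (norm u)\<^sup>2 \<le> Re (cinner u (\<omega> *v u))" if "\<And>y. \<omega> *v y = 0 \<Longrightarrow> cinner y u = 0" for u
      using \<open>subspace C\<close> that l(2) by (intro quadratic_form_ge_on_subspace) (auto simp: C_def U_def f_def)
  qed
qed

lemma quadratic_form_bounded:
  fixes A :: "'n::finite cmat"
  obtains K where "K > 0" "\<And>u. Re (cinner u (A *v u)) \<le> K * (norm u)\<^sup>2"
proof -
  obtain K where K: "K > 0" "\<And>x. norm (A *v x) \<le> norm x * K"
    using bounded_linear.pos_bounded[OF bounded_linear_mv[of A]] by blast
  have "Re (cinner u (A *v u)) \<le> K * (norm u)\<^sup>2" for u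
  proof -
    have "Re (cinner u (A *v u)) \<le> norm u * norm (A *v u)"
      unfolding inner_vec_eq_Re_cinner[symmetric] by (rule norm_cauchy_schwarz)
    also have "\<dots> \<le> norm u * (norm u * K)"
      using K(2) by (simp add: mult_left_mono)
    finally show ?thesis
      by (simp add: power2_eq_square mult_ac)
  qed
  with K(1) show ?thesis
    by (rule that)
qed

lemma psd_dominated_if_kernel_subset:
  fixes \<omega> \<sigma> :: "'n::finite cmat"
  assumes "psd \<omega>" "psd \<sigma>" "\<And>y. \<omega> *v y = 0 \<Longrightarrow> \<sigma> *v y = 0"
  obtains c where "c \<ge> 0" "psd (c *\<^sub>R \<omega> - \<sigma>)"
proof -
  obtain l where l: "l > 0"
    "\<And>u. (\<And>y. \<omega> *v y = 0 \<Longrightarrow> cinner y u = 0) \<Longrightarrow> l * (norm u)\<^sup>2 \<le> Re (cinner u (\<omega> *v u))"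
    using psd_coercive_on_kernel_complement[OF assms(1)] by blast
  obtain K where K: "K > 0" "\<And>u. Re (cinner u (\<sigma> *v u)) \<le> K * (norm u)\<^sup>2"
    using quadratic_form_bounded by blast
  define c where "c = K / l"
  have "psd (c *\<^sub>R \<omega> - \<sigma>)"
    unfolding psd_def
  proof
    fix x
    obtain v u where vu: "\<omega> *v v = 0" "\<And>y. \<omega> *v y = 0 \<Longrightarrow> cinner y u = 0" "x = v + u"
      using kernel_orthogonal_decomp by blast
    have "cinner x ((c *\<^sub>R \<omega> - \<sigma>) *v x) = of_real c * cinner u (\<omega> *v u) - cinner u (\<sigma> *v u)"
      using cinner_quadratic_kernel_shift[OF assms(1) vu(1)]
        cinner_quadratic_kernel_shift[OF assms(2) assms(3)[OF vu(1)]]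
      by (simp add: vu(3) matrix_vector_mult_diff_rdistrib matrix_scaleR_mv cinner_diff_right
          cinner_scaleR_right)
    moreover have "Im (cinner u (\<omega> *v u)) = 0" "Im (cinner u (\<sigma> *v u)) = 0"
      using assms(1,2) unfolding psd_def by auto
    moreover have "K * (norm u)\<^sup>2 \<le> c * Re (cinner u (\<omega> *v u))"
      using mult_left_mono[OF l(2)[OF vu(2)], of c] l(1) K(1) by (simp add: c_def)
    ultimately show "Im (cinner x ((c *\<^sub>R \<omega> - \<sigma>) *v x)) = 0 \<and> 0 \<le> Re (cinner x ((c *\<^sub>R \<omega> - \<sigma>) *v x))"
      using K(2)[of u] by simp
  qed
  moreover have "c \<ge> 0"
    using K(1) l(1) by (simp add: c_def)
  ultimately show ?thesis
    using that by blast
qed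

lemma psd_scaleR_diff_quadratic_le:
  assumes "psd (c *\<^sub>R \<omega> - (\<tau>::'n::finite cmat))"
  shows "Re (cinner a (\<tau> *v a)) \<le> c * Re (cinner a (\<omega> *v a))"
  using assms unfolding psd_def
  by (simp add: matrix_vector_mult_diff_rdistrib matrix_scaleR_mv cinner_diff_right cinner_scaleR_right)

lemma psd_dominated_kernel:
  fixes \<omega> \<tau> :: "'n::finite cmat"
  assumes "psd \<tau>" "psd (c *\<^sub>R \<omega> - \<tau>)" "\<omega> *v y = 0"
  shows "\<tau> *v y = 0" "cinner y (\<tau> *v z) = 0"
proof -
  have "Re (cinner y (\<tau> *v y)) \<le> 0"
    using psd_scaleR_diff_quadratic_le[OF assms(2), of y] assms(3) by simp
  moreover have "Re (cinner y (\<tau> *v y)) \<ge> 0"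
    using assms(1) unfolding psd_def by auto
  ultimately have "Re (cinner y (\<tau> *v y)) = 0"
    by simp
  then show "\<tau> *v y = 0" "cinner y (\<tau> *v z) = 0"
    using psd_null_vector[OF assms(1)] by auto
qed

lemma normalized_outer_in_densities:
  assumes "csubspace K" "x \<in> K" "x \<noteq> 0"
  shows "(1 / (norm x)\<^sup>2) *\<^sub>R outer x x \<in> densities K"
  unfolding densities_def density_def
proof (intro CollectI conjI)
  show "psd ((1 / (norm x)\<^sup>2) *\<^sub>R outer x x)"
    by (intro psd_scaleR psd_outer) simp
  have "trace (outer x x) = cinner x x"
    by (simp add: trace_def outer_def cinner_def mult.commute)
  then show "trace ((1 / (norm x)\<^sup>2) *\<^sub>R outer x x) = 1"
    using assms(3) by (simp add: trace_scaleR cinner_self flip: of_real_mult)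
  have "(1 / (norm x)\<^sup>2) *\<^sub>R outer x x *v v = (of_real (1 / (norm x)\<^sup>2) * cinner x v) *s x" for v
    unfolding matrix_scaleR_mv outer_mv
    by (simp add: vec_eq_iff vector_scaleR_component scaleR_complex)
  then show "supp ((1 / (norm x)\<^sup>2) *\<^sub>R outer x x) \<subseteq> K"
    using assms(1,2) unfolding supp_def csubspace_def by auto
qed


section \<open>The Lindblad semigroup\<close>

definition lindblad_damping :: "'n::finite cmat list \<Rightarrow> 'n cmat" where
  "lindblad_damping Ds = (- (1/2)) *\<^sub>R (\<Sum>D\<leftarrow>Ds. adjoint D ** D)"

definition lindblad_jump :: "'n::finite cmat list \<Rightarrow> 'n cmat \<Rightarrow> 'n cmat" where
  "lindblad_jump Ds \<rho> = (\<Sum>D\<leftarrow>Ds. D ** \<rho> ** adjoint D)"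

lemma adjoint_lindblad_damping: "adjoint (lindblad_damping Ds) = lindblad_damping Ds"
proof -
  have "adjoint (\<Sum>D\<leftarrow>Ds. adjoint D ** D) = (\<Sum>D\<leftarrow>Ds. adjoint D ** D)"
    by (induction Ds) (simp_all add: adjoint_add adjoint_mult)
  then show ?thesis
    unfolding lindblad_damping_def adjoint_scaleR by simp
qed

lemma lindblad_D_eq_jump_damping:
  "lindblad_D Ds \<rho> = lindblad_jump Ds \<rho> + (lindblad_damping Ds ** \<rho> + \<rho> ** lindblad_damping Ds)"
proof (induction Ds)
  case Nil
  then show ?case
    by (simp add: lindblad_D_def lindblad_jump_def lindblad_damping_def)
next
  case (Cons D Ds)
  have L: "lindblad_D (D # Ds) \<rho> = (D ** \<rho> ** adjoint D
      - (1/2::real) *\<^sub>R ((adjoint D ** D) ** \<rho> + \<rho> ** (adjoint D ** D))) + lindblad_D Ds \<rho>"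
    by (simp add: lindblad_D_def)
  have J: "lindblad_jump (D # Ds) \<rho> = D ** \<rho> ** adjoint D + lindblad_jump Ds \<rho>"
    by (simp add: lindblad_jump_def)
  have M: "lindblad_damping (D # Ds) = (- (1/2)) *\<^sub>R (adjoint D ** D) + lindblad_damping Ds"
    by (simp add: lindblad_damping_def scaleR_add_right)
  show ?case
    unfolding L J M Cons
    by (simp add: matrix_add_rdistrib matrix_add_ldistrib matrix_diff_rdistrib matrix_diff_ldistrib
        matrix_scaleR_mult_left matrix_scaleR_mult_right scaleR_add_right algebra_simps)
qed

lemma linear_sandwich: "linear (\<lambda>\<rho>::'n::finite cmat. (A::'n cmat) ** \<rho> ** B)"
  by (rule linearI)
    (simp_all add: matrix_add_ldistrib matrix_add_rdistrib matrix_scaleR_mult_left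
      matrix_scaleR_mult_right)

lemma linear_lindblad_D: "linear (lindblad_D (Ds::'n::finite cmat list))"
proof -
  have "linear (lindblad_jump Ds)"
  proof (induction Ds)
    case (Cons D Ds)
    then show ?case
      using linear_compose_add[OF linear_sandwich Cons]
      by (simp add: lindblad_jump_def[abs_def])
  qed (simp add: lindblad_jump_def[abs_def] linear_zero)
  moreover have "linear (\<lambda>\<rho>::'n cmat. lindblad_damping Ds ** \<rho> + \<rho> ** lindblad_damping Ds)"
    using linear_compose_add[OF linear_sandwich[of _ "mat 1"] linear_sandwich[of "mat 1"]] by simp
  ultimately show ?thesis
    using linear_compose_add unfolding lindblad_D_eq_jump_damping[abs_def] by blast
qed

lemma trace_lindblad_D: "trace (lindblad_D Ds \<rho>) = 0"
proof (induction Ds)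
  case (Cons D Ds)
  have "trace (D ** \<rho> ** adjoint D) = trace ((adjoint D ** D) ** \<rho>)"
    by (metis trace_mul_sym matrix_mul_assoc)
  moreover have "trace (\<rho> ** (adjoint D ** D)) = trace ((adjoint D ** D) ** \<rho>)"
    by (rule trace_mul_sym)
  ultimately show ?case
    using Cons by (simp add: lindblad_D_def trace_add trace_sub trace_scaleR)
qed (simp add: lindblad_D_def trace_def)

definition lindblad_generator :: "'n::finite cmat list \<Rightarrow> 'n cmat sop" where
  "lindblad_generator Ds = sop_of_fun (lindblad_D Ds)"

definition lindblad_exp :: "'n::finite cmat list \<Rightarrow> real \<Rightarrow> 'n cmat \<Rightarrow> 'n cmat" where
  "lindblad_exp Ds t = sop_apply (exp (t *\<^sub>R lindblad_generator Ds))"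

lemma sop_apply_lindblad_generator: "sop_apply (lindblad_generator Ds) = lindblad_D Ds"
  unfolding lindblad_generator_def
  by (intro sop_apply_sop_of_fun linear_conv_bounded_linear[THEN iffD1] linear_lindblad_D)

lemma sums_lindblad_exp:
  "(\<lambda>k. (t ^ k / fact k) *\<^sub>R (lindblad_D Ds ^^ k) \<rho>) sums lindblad_exp Ds t \<rho>"
proof -
  have "(\<lambda>k. sop_apply ((t *\<^sub>R lindblad_generator Ds) ^ k /\<^sub>R fact k) \<rho>)
      sums sop_apply (exp (t *\<^sub>R lindblad_generator Ds)) \<rho>"
    unfolding exp_def
    by (rule bounded_linear.sums[OF bounded_linear_sop_apply_left summable_exp_generic[THEN summable_sums]])
  moreover have "sop_apply ((t *\<^sub>R lindblad_generator Ds) ^ k /\<^sub>R fact k) \<rho>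
      = (t ^ k / fact k) *\<^sub>R (lindblad_D Ds ^^ k) \<rho>" for k
    by (simp add: sop_apply_scaleR sop_apply_power sop_apply_lindblad_generator scaleR_power
        divide_inverse mult.commute)
  ultimately show ?thesis
    by (simp add: lindblad_exp_def)
qed

lemma evol_lindblad_D: "evol (lindblad_D Ds) t = lindblad_exp Ds t"
  using sums_lindblad_exp by (auto simp: evol_def fun_eq_iff sums_iff)

lemma lindblad_exp_0: "lindblad_exp Ds 0 \<rho> = \<rho>"
  by (simp add: lindblad_exp_def sop_apply_one)

lemma lindblad_exp_add: "lindblad_exp Ds (s + t) \<rho> = lindblad_exp Ds s (lindblad_exp Ds t \<rho>)"
proof -
  have "exp ((s + t) *\<^sub>R lindblad_generator Ds)
      = exp (s *\<^sub>R lindblad_generator Ds) * exp (t *\<^sub>R lindblad_generator Ds)"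
    unfolding scaleR_add_left by (rule exp_add_commuting) simp
  then show ?thesis
    by (simp add: lindblad_exp_def sop_apply_mult)
qed

lemma linear_lindblad_exp: "linear (lindblad_exp Ds t)"
  unfolding lindblad_exp_def by (rule linear_sop_apply)

lemmas lindblad_exp_plus = linear_add[OF linear_lindblad_exp]
   and lindblad_exp_diff = linear_diff[OF linear_lindblad_exp]
   and lindblad_exp_scaleR = linear_scale[OF linear_lindblad_exp]
   and lindblad_exp_zero = linear_0[OF linear_lindblad_exp]

lemma lindblad_exp_sum_list: "lindblad_exp Ds t (sum_list \<rho>s) = (\<Sum>\<rho>\<leftarrow>\<rho>s. lindblad_exp Ds t \<rho>)"
  by (induction \<rho>s) (simp_all add: lindblad_exp_zero lindblad_exp_plus)

lemma trace_lindblad_exp: "trace (lindblad_exp Ds t \<rho>) = trace \<rho>"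
proof -
  have "bounded_linear (trace :: 'n::finite cmat \<Rightarrow> complex)"
    by (intro linear_conv_bounded_linear[THEN iffD1] linearI)
      (simp_all add: trace_add trace_scaleR scaleR_complex)
  from bounded_linear.sums[OF this sums_lindblad_exp]
  have "(\<lambda>k. trace ((t ^ k / fact k) *\<^sub>R (lindblad_D Ds ^^ k) \<rho>)) sums trace (lindblad_exp Ds t \<rho>)" .
  moreover have "trace ((t ^ k / fact k) *\<^sub>R (lindblad_D Ds ^^ k) \<rho>) = (if k = 0 then trace \<rho> else 0)"
    for k
    by (cases k) (simp_all add: trace_scaleR trace_lindblad_D)
  ultimately show ?thesis
    using sums_single[of 0 "\<lambda>_. trace \<rho>"] sums_unique2 by force
qed


definition damping_sandwich :: "'n::finite cmat list \<Rightarrow> 'n cmat sop" where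
  "damping_sandwich Ds = sop_of_fun (\<lambda>\<rho>. lindblad_damping Ds ** \<rho> ** lindblad_damping Ds)"

text \<open>With \<open>M\<close> the damping matrix, \<open>\<Phi>\<close> the jump part and \<open>R(\<rho>) = M \<rho> M\<close>, the step
  \<open>1 + \<epsilon> L + \<epsilon>\<^sup>2 R\<close> maps \<open>\<rho>\<close> to \<open>(1 + \<epsilon> M) \<rho> (1 + \<epsilon> M)\<^sup>\<dagger> + \<epsilon> \<Phi>(\<rho>)\<close>, which is manifestly
  positive; by the product formula its \<open>n\<close>-th power with \<open>\<epsilon> = t/n\<close> tends to \<open>e\<^sup>L\<^sup>t\<close>.\<close>

lemma psd_lindblad_step:
  fixes Ds :: "'n::finite cmat list"
  assumes "psd \<rho>" "\<epsilon> \<ge> 0"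
  shows "psd (sop_apply (1 + \<epsilon> *\<^sub>R lindblad_generator Ds + \<epsilon>\<^sup>2 *\<^sub>R damping_sandwich Ds) \<rho>)"
proof -
  define M where "M = lindblad_damping Ds"
  define X where "X = mat 1 + \<epsilon> *\<^sub>R M"
  have "bounded_linear (\<lambda>\<rho>::'n cmat. M ** \<rho> ** M)"
    by (intro linear_conv_bounded_linear[THEN iffD1] linear_sandwich)
  then have "sop_apply (1 + \<epsilon> *\<^sub>R lindblad_generator Ds + \<epsilon>\<^sup>2 *\<^sub>R damping_sandwich Ds) \<rho>
      = \<rho> + \<epsilon> *\<^sub>R (lindblad_jump Ds \<rho> + (M ** \<rho> + \<rho> ** M)) + \<epsilon>\<^sup>2 *\<^sub>R (M ** \<rho> ** M)"
    by (simp add: M_def damping_sandwich_def sop_apply_add sop_apply_one sop_apply_scaleR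
        sop_apply_lindblad_generator sop_apply_sop_of_fun lindblad_D_eq_jump_damping)
  also have "\<dots> = X ** \<rho> ** adjoint X + \<epsilon> *\<^sub>R lindblad_jump Ds \<rho>"
    by (simp add: X_def M_def adjoint_add adjoint_scaleR adjoint_lindblad_damping matrix_add_ldistrib
        matrix_add_rdistrib matrix_scaleR_mult_left matrix_scaleR_mult_right scaleR_add_right
        power2_eq_square algebra_simps)
  also have "psd \<dots>"
    unfolding lindblad_jump_def
    by (intro psd_add psd_congruence psd_scaleR psd_sum_list assms) (auto intro: psd_congruence assms)
  finally show ?thesis .
qed

lemma psd_lindblad_exp:
  fixes Ds :: "'n::finite cmat list"
  assumes "psd \<rho>" "t \<ge> 0"
  shows "psd (lindblad_exp Ds t \<rho>)"
proof -
  define step where "step n = 1 + (t / real n) *\<^sub>R lindblad_generator Ds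
      + (t / real n)\<^sup>2 *\<^sub>R damping_sandwich Ds" for n
  have "(\<lambda>n. t *\<^sub>R lindblad_generator Ds + (t\<^sup>2 / real n) *\<^sub>R damping_sandwich Ds)
      \<longlonglongrightarrow> t *\<^sub>R lindblad_generator Ds + 0 *\<^sub>R damping_sandwich Ds"
    by (intro tendsto_intros lim_const_over_n)
  from tendsto_one_plus_div_power_exp[OF this[simplified]]
  have "(\<lambda>n. step n ^ n) \<longlonglongrightarrow> exp (t *\<^sub>R lindblad_generator Ds)"
    by (rule Lim_transform_eventually)
      (use eventually_gt_at_top[of 0] in \<open>eventually_elim, simp add: step_def scaleR_add_right
        power2_eq_square divide_inverse mult_ac add.assoc\<close>)
  then have "(\<lambda>n. sop_apply (step n ^ n) \<rho>) \<longlonglongrightarrow> lindblad_exp Ds t \<rho>"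
    unfolding lindblad_exp_def by (rule bounded_linear.tendsto[OF bounded_linear_sop_apply_left])
  moreover have "psd (sop_apply (step n ^ k) \<sigma>)" if "psd \<sigma>" for n k \<sigma>
    using that
  proof (induction k arbitrary: \<sigma>)
    case (Suc k)
    have "t / real n \<ge> 0"
      using assms(2) by simp
    with Suc show ?case
      unfolding power_Suc2 sop_apply_mult step_def by (blast intro: Suc.IH psd_lindblad_step)
  qed (simp add: sop_apply_one)
  ultimately show ?thesis
    using assms(1) by (intro psd_limit[of _ _ sequentially]) auto
qed


section \<open>Convergence to a pure state\<close>

lemma psd_cross_term_tendsto_zero:
  fixes \<tau> :: "'a \<Rightarrow> 'n::finite cmat"
  assumes psd: "\<forall>\<^sub>F t in F. psd (\<tau> t)"
    and bounded: "\<forall>\<^sub>F t in F. Re (cinner a (\<tau> t *v a)) \<le> K"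
    and null: "((\<lambda>t. Re (cinner w (\<tau> t *v w))) \<longlongrightarrow> 0) F"
  shows "((\<lambda>t. cinner a (\<tau> t *v w)) \<longlongrightarrow> 0) F" "((\<lambda>t. cinner w (\<tau> t *v a)) \<longlongrightarrow> 0) F"
proof -
  show lim: "((\<lambda>t. cinner a (\<tau> t *v w)) \<longlongrightarrow> 0) F"
  proof (rule Lim_null_comparison)
    show "\<forall>\<^sub>F t in F. norm (cinner a (\<tau> t *v w)) \<le> sqrt (K * Re (cinner w (\<tau> t *v w)))"
      using bounded psd
    proof eventually_elim
      case (elim t)
      have "(cmod (cinner a (\<tau> t *v w)))\<^sup>2 \<le> Re (cinner a (\<tau> t *v a)) * Re (cinner w (\<tau> t *v w))"
        by (rule psd_Cauchy_Schwarz[OF elim(2)])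
      also have "\<dots> \<le> K * Re (cinner w (\<tau> t *v w))"
        using elim unfolding psd_def by (intro mult_right_mono) auto
      finally show ?case
        by (simp add: real_le_rsqrt)
    qed
    show "((\<lambda>t. sqrt (K * Re (cinner w (\<tau> t *v w)))) \<longlongrightarrow> 0) F"
      using tendsto_real_sqrt[OF tendsto_mult[OF tendsto_const null, of K]] by simp
  qed
  have "\<forall>\<^sub>F t in F. cnj (cinner a (\<tau> t *v w)) = cinner w (\<tau> t *v a)"
    using psd by (rule eventually_mono) (simp add: psd_cinner_swap[of _ w a])
  with tendsto_cnj[OF lim] show "((\<lambda>t. cinner w (\<tau> t *v a)) \<longlongrightarrow> 0) F"
    by (simp add: Lim_transform_eventually)
qed

definition perp_axis :: "complex^'n::finite \<Rightarrow> 'n \<Rightarrow> complex^'n" where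
  "perp_axis \<psi> i = axis i 1 - cnj (\<psi> $ i) *s \<psi>"

lemma cinner_perp_axis: "cinner \<psi> \<psi> = 1 \<Longrightarrow> cinner \<psi> (perp_axis \<psi> i) = 0"
  by (simp add: perp_axis_def cinner_diff_right cinner_smult_right cinner_axis_right)

lemma matrix_entry_split:
  fixes A :: "'n::finite cmat"
  shows "A $ i $ j = \<psi> $ i * cnj (\<psi> $ j) * cinner \<psi> (A *v \<psi>)
    + (\<psi> $ i * cinner \<psi> (A *v perp_axis \<psi> j) + cnj (\<psi> $ j) * cinner (perp_axis \<psi> i) (A *v \<psi>)
       + cinner (perp_axis \<psi> i) (A *v perp_axis \<psi> j))"
proof -
  have "A $ i $ j = cinner (axis i 1) (A *v axis j 1)"
    by (rule cinner_axis_mv_axis[symmetric])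
  also have "\<dots> = cinner (cnj (\<psi> $ i) *s \<psi> + perp_axis \<psi> i) (A *v (cnj (\<psi> $ j) *s \<psi> + perp_axis \<psi> j))"
    by (simp add: perp_axis_def)
  finally show ?thesis
    unfolding cinner_sesquilinear_expand by (simp add: algebra_simps)
qed

text \<open>The parts of the entries involving \<open>\<psi>\<^sup>\<bottom>\<close> vanish in the limit by Cauchy-Schwarz, and the
  trace condition then forces \<open>\<langle>\<psi>, \<tau> t \<psi>\<rangle> \<longrightarrow> 1\<close>.\<close>

lemma tendsto_outer_if_complement_vanishes:
  fixes \<tau> :: "'a \<Rightarrow> 'n::finite cmat"
  assumes unit: "cinner \<psi> \<psi> = 1"
    and psd: "\<forall>\<^sub>F t in F. psd (\<tau> t)"
    and trace: "\<And>t. trace (\<tau> t) = 1"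
    and bounded: "\<And>a. \<exists>K. \<forall>\<^sub>F t in F. Re (cinner a (\<tau> t *v a)) \<le> K"
    and null: "\<And>w. cinner \<psi> w = 0 \<Longrightarrow> ((\<lambda>t. Re (cinner w (\<tau> t *v w))) \<longlongrightarrow> 0) F"
  shows "(\<tau> \<longlongrightarrow> outer \<psi> \<psi>) F"
proof -
  define Q where "Q t = cinner \<psi> (\<tau> t *v \<psi>)" for t
  define R where "R i j t = \<psi> $ i * cinner \<psi> (\<tau> t *v perp_axis \<psi> j)
      + cnj (\<psi> $ j) * cinner (perp_axis \<psi> i) (\<tau> t *v \<psi>)
      + cinner (perp_axis \<psi> i) (\<tau> t *v perp_axis \<psi> j)" for i j t
  have entry: "\<tau> t $ i $ j = \<psi> $ i * cnj (\<psi> $ j) * Q t + R i j t" for t i j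
    unfolding Q_def R_def by (rule matrix_entry_split)
  have cross: "((\<lambda>t. cinner a (\<tau> t *v perp_axis \<psi> k)) \<longlongrightarrow> 0) F"
    "((\<lambda>t. cinner (perp_axis \<psi> k) (\<tau> t *v a)) \<longlongrightarrow> 0) F" for a k
    using bounded[of a] psd_cross_term_tendsto_zero[OF psd _ null[OF cinner_perp_axis[OF unit]]]
    by blast+
  have R_lim: "(R i j \<longlongrightarrow> 0) F" for i j
    unfolding R_def[abs_def]
    using tendsto_add[OF tendsto_add[OF tendsto_mult[OF tendsto_const cross(1)]
        tendsto_mult[OF tendsto_const cross(2)]] cross(1)]
    by simp
  have "1 = (\<Sum>i\<in>UNIV. \<psi> $ i * cnj (\<psi> $ i) * Q t + R i i t)" for t
    using trace[of t] unfolding trace_def entry by simp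
  also have "(\<Sum>i\<in>UNIV. \<psi> $ i * cnj (\<psi> $ i) * Q t + R i i t) = Q t + (\<Sum>i\<in>UNIV. R i i t)" for t
    using unit by (simp add: sum.distrib cinner_def mult.commute flip: sum_distrib_left)
  finally have "Q = (\<lambda>t. 1 - (\<Sum>i\<in>UNIV. R i i t))"
    by (simp add: fun_eq_iff eq_diff_eq)
  moreover have "((\<lambda>t. 1 - (\<Sum>i\<in>UNIV. R i i t)) \<longlongrightarrow> 1 - (\<Sum>i\<in>(UNIV::'n set). 0)) F"
    by (intro tendsto_diff tendsto_const tendsto_sum R_lim)
  ultimately have Q_lim: "(Q \<longlongrightarrow> 1) F"
    by simp
  show ?thesis
  proof (intro vec_tendstoI)
    fix i j
    have "((\<lambda>t. \<psi> $ i * cnj (\<psi> $ j) * Q t + R i j t) \<longlongrightarrow> \<psi> $ i * cnj (\<psi> $ j) * 1 + 0) F"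
      by (intro tendsto_intros Q_lim R_lim)
    then show "((\<lambda>t. \<tau> t $ i $ j) \<longlongrightarrow> outer \<psi> \<psi> $ i $ j) F"
      by (simp add: entry outer_def)
  qed
qed


lemma tendsto_outer_if_dominated:
  fixes \<tau> \<omega> :: "'a \<Rightarrow> 'n::finite cmat"
  assumes unit: "cinner \<psi> \<psi> = 1"
    and psd: "\<forall>\<^sub>F t in F. psd (\<tau> t)"
    and trace: "\<And>t. trace (\<tau> t) = 1"
    and dom: "\<forall>\<^sub>F t in F. psd (c *\<^sub>R \<omega> t - \<tau> t)"
    and lim: "(\<omega> \<longlongrightarrow> m *\<^sub>R outer \<psi> \<psi>) F"
  shows "(\<tau> \<longlongrightarrow> outer \<psi> \<psi>) F"
proof -
  define q where "q t a = c * Re (cinner a (\<omega> t *v a))" for t a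
  have below: "\<forall>\<^sub>F t in F. \<forall>a. Re (cinner a (\<tau> t *v a)) \<le> q t a"
    using dom by eventually_elim (simp add: q_def psd_scaleR_diff_quadratic_le)
  have q_lim: "((\<lambda>t. q t a) \<longlongrightarrow> c * (m * (cmod (cinner \<psi> a))\<^sup>2)) F" for a
  proof -
    have "cinner a ((m *\<^sub>R outer \<psi> \<psi>) *v a) = of_real m * (cnj (cinner \<psi> a) * cinner \<psi> a)"
      unfolding matrix_scaleR_mv outer_mv cinner_scaleR_right cinner_smult_right cnj_cinner
      by (simp add: mult.commute)
    then have "Re (cinner a ((m *\<^sub>R outer \<psi> \<psi>) *v a)) = m * (cmod (cinner \<psi> a))\<^sup>2"
      by (simp add: mult.commute[of "cnj _"] flip: complex_norm_square)
    with tendsto_Re[OF tendsto_cinner_mv[OF lim, of a a]] show ?thesis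
      unfolding q_def by (intro tendsto_mult_left) simp
  qed
  show ?thesis
  proof (rule tendsto_outer_if_complement_vanishes[OF unit psd trace])
    show "\<exists>K. \<forall>\<^sub>F t in F. Re (cinner a (\<tau> t *v a)) \<le> K" for a
    proof
      have "\<forall>\<^sub>F t in F. q t a < c * (m * (cmod (cinner \<psi> a))\<^sup>2) + 1"
        using q_lim[of a] by (rule order_tendstoD) simp
      with below show "\<forall>\<^sub>F t in F. Re (cinner a (\<tau> t *v a)) \<le> c * (m * (cmod (cinner \<psi> a))\<^sup>2) + 1"
        by eventually_elim (meson less_imp_le order_trans)
    qed
    show "((\<lambda>t. Re (cinner w (\<tau> t *v w))) \<longlongrightarrow> 0) F" if "cinner \<psi> w = 0" for w
    proof (rule tendsto_sandwich[OF _ _ tendsto_const])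
      show "\<forall>\<^sub>F t in F. 0 \<le> Re (cinner w (\<tau> t *v w))"
        using psd by eventually_elim (simp add: psd_def)
      show "\<forall>\<^sub>F t in F. Re (cinner w (\<tau> t *v w)) \<le> q t w"
        using below by eventually_elim blast
      show "((\<lambda>t. q t w) \<longlongrightarrow> 0) F"
        using q_lim[of w] that by simp
    qed
  qed
qed


section \<open>The invariant subspace\<close>

locale lindblad_stable =
  fixes Ds :: "'n::finite cmat list" and H'' :: "(complex^'n) set" and \<rho>d :: "'n cmat"
  assumes csubspace_H'': "csubspace H''"
    and stable: "cond_asymp_stable (lindblad_D Ds) \<rho>d H''"
begin

definition reached :: "'n cmat set" where
  "reached = {lindblad_exp Ds t \<rho>0 | t \<rho>0. t \<ge> 0 \<and> \<rho>0 \<in> densities H''}"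

definition reached_sums :: "'n cmat set" where
  "reached_sums = {sum_list \<sigma>s | \<sigma>s. set \<sigma>s \<subseteq> reached}"

definition N :: "(complex^'n) set" where
  "N = {y. \<forall>\<sigma>\<in>reached. \<sigma> *v y = 0}"

definition H' :: "(complex^'n) set" where
  "H' = {x. \<forall>y\<in>N. cinner y x = 0}"

lemma psd_reached: "\<sigma> \<in> reached \<Longrightarrow> psd \<sigma>"
  unfolding reached_def densities_def density_def by (auto intro: psd_lindblad_exp)

lemma lindblad_exp_reached:
  assumes "\<sigma> \<in> reached" "s \<ge> 0"
  shows "lindblad_exp Ds s \<sigma> \<in> reached"
proof -
  obtain t \<rho>0 where "t \<ge> 0" "\<rho>0 \<in> densities H''" "\<sigma> = lindblad_exp Ds t \<rho>0"
    using assms(1) unfolding reached_def by blast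
  with assms(2) show ?thesis
    unfolding reached_def by (auto simp flip: lindblad_exp_add intro!: exI[of _ "s + t"])
qed

lemma tendsto_lindblad_exp_reached:
  assumes "\<sigma> \<in> reached"
  shows "((\<lambda>s. lindblad_exp Ds s \<sigma>) \<longlongrightarrow> \<rho>d) at_top"
proof -
  obtain t \<rho>0 where "t \<ge> 0" "\<rho>0 \<in> densities H''" and \<sigma>: "\<sigma> = lindblad_exp Ds t \<rho>0"
    using assms unfolding reached_def by blast
  then have "((\<lambda>s. lindblad_exp Ds s \<rho>0) \<longlongrightarrow> \<rho>d) at_top"
    using stable unfolding cond_asymp_stable_def evol_lindblad_D by blast
  moreover have "filterlim (\<lambda>s. s + t) at_top at_top"
    using filterlim_tendsto_add_at_top[OF tendsto_const filterlim_ident, of t] by (simp add: add.commute)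
  ultimately show ?thesis
    unfolding \<sigma> lindblad_exp_add[symmetric] by (rule filterlim_compose)
qed

lemma psd_reached_sums: "\<omega> \<in> reached_sums \<Longrightarrow> psd \<omega>"
  unfolding reached_sums_def by (auto intro!: psd_sum_list intro: psd_reached)

lemma reached_sums_kernel: "\<omega> \<in> reached_sums \<Longrightarrow> y \<in> N \<Longrightarrow> \<omega> *v y = 0"
proof -
  have "set \<sigma>s \<subseteq> reached \<Longrightarrow> y \<in> N \<Longrightarrow> sum_list \<sigma>s *v y = 0" for \<sigma>s
    by (induction \<sigma>s) (auto simp: N_def matrix_vector_mult_add_rdistrib)
  then show "\<omega> \<in> reached_sums \<Longrightarrow> y \<in> N \<Longrightarrow> \<omega> *v y = 0"
    unfolding reached_sums_def by blast
qed

lemma reached_sums_add: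
  assumes "\<omega> \<in> reached_sums" "\<sigma> \<in> reached"
  shows "\<omega> + \<sigma> \<in> reached_sums"
proof -
  obtain \<sigma>s where "set \<sigma>s \<subseteq> reached" "\<omega> = sum_list \<sigma>s"
    using assms(1) unfolding reached_sums_def by blast
  with assms(2) show ?thesis
    unfolding reached_sums_def by (intro CollectI exI[of _ "\<sigma>s @ [\<sigma>]"]) auto
qed

lemma lindblad_exp_reached_sums:
  assumes "\<omega> \<in> reached_sums" "s \<ge> 0"
  shows "lindblad_exp Ds s \<omega> \<in> reached_sums"
proof -
  obtain \<sigma>s where "set \<sigma>s \<subseteq> reached" and \<omega>: "\<omega> = sum_list \<sigma>s"
    using assms(1) unfolding reached_sums_def by blast
  then show ?thesis
    unfolding reached_sums_def \<omega> lindblad_exp_sum_list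
    by (intro CollectI exI[of _ "map (lindblad_exp Ds s) \<sigma>s"]) (auto intro: lindblad_exp_reached assms(2))
qed

lemma tendsto_lindblad_exp_reached_sums:
  assumes "\<omega> \<in> reached_sums"
  obtains m :: real where "((\<lambda>s. lindblad_exp Ds s \<omega>) \<longlongrightarrow> m *\<^sub>R \<rho>d) at_top"
proof -
  have "((\<lambda>s. lindblad_exp Ds s (sum_list \<sigma>s)) \<longlongrightarrow> real (length \<sigma>s) *\<^sub>R \<rho>d) at_top"
    if "set \<sigma>s \<subseteq> reached" for \<sigma>s
    using that
  proof (induction \<sigma>s)
    case (Cons \<sigma> \<sigma>s)
    then show ?case
      using tendsto_add[OF tendsto_lindblad_exp_reached Cons.IH]
      by (simp add: lindblad_exp_plus algebra_simps)
  qed (simp add: lindblad_exp_zero)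
  then show ?thesis
    using assms that unfolding reached_sums_def by blast
qed

text \<open>A reached sum of least kernel dimension has kernel exactly \<open>N\<close>: adding a reached state that
  does not vanish on its kernel would shrink the kernel.\<close>

lemma reached_sum_with_kernel_N: "\<exists>\<omega>\<in>reached_sums. {y. \<omega> *v y = 0} = N"
proof -
  define ker where "ker \<omega> = {y. \<omega> *v y = (0::complex^'n)}" for \<omega> :: "'n cmat"
  have "0 \<in> reached_sums"
    unfolding reached_sums_def by (auto intro!: exI[of _ "[]"])
  then obtain \<omega> where \<omega>: "\<omega> \<in> reached_sums"
    and least: "\<And>\<omega>'. \<omega>' \<in> reached_sums \<Longrightarrow> dim (ker \<omega>) \<le> dim (ker \<omega>')"
    using ex_has_least_nat[of "\<lambda>\<omega>. \<omega> \<in> reached_sums" 0 "\<lambda>\<omega>. dim (ker \<omega>)"] by blast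
  have subspace_ker: "subspace (ker \<omega>')" for \<omega>'
    unfolding subspace_def ker_def by (simp add: matrix_vector_right_distrib matrix_mv_scaleR)
  have "y \<in> N" if y: "y \<in> ker \<omega>" for y
  proof (rule ccontr)
    assume "y \<notin> N"
    then obtain \<sigma> where \<sigma>: "\<sigma> \<in> reached" "\<sigma> *v y \<noteq> 0"
      unfolding N_def by blast
    have "ker (\<omega> + \<sigma>) = ker \<omega> \<inter> ker \<sigma>"
      unfolding ker_def by (rule psd_kernel_add[OF psd_reached_sums[OF \<omega>] psd_reached[OF \<sigma>(1)]])
    with y \<sigma>(2) have "ker (\<omega> + \<sigma>) \<subset> ker \<omega>"
      unfolding ker_def by auto
    then have "span (ker (\<omega> + \<sigma>)) \<subset> span (ker \<omega>)"
      using subspace_ker span_eq_iff by metis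
    then have "dim (ker (\<omega> + \<sigma>)) < dim (ker \<omega>)"
      by (rule eucl.dim_psubset)
    with least[OF reached_sums_add[OF \<omega> \<sigma>(1)]] show False
      by simp
  qed
  moreover have "N \<subseteq> ker \<omega>"
    using reached_sums_kernel[OF \<omega>] unfolding ker_def by blast
  ultimately show ?thesis
    using \<omega> unfolding ker_def by blast
qed

lemma csubspace_H': "csubspace H'"
  unfolding csubspace_def H'_def by (simp add: cinner_add_right cinner_smult_right)

lemma H''_subset_H': "H'' \<subseteq> H'"
proof
  fix x
  assume x: "x \<in> H''"
  show "x \<in> H'"
  proof (cases "x = 0")
    case False
    define \<rho>0 where "\<rho>0 = (1 / (norm x)\<^sup>2) *\<^sub>R outer x x"
    have "\<rho>0 \<in> reached"
      using normalized_outer_in_densities[OF csubspace_H'' x False] lindblad_exp_0[of Ds \<rho>0]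
      unfolding reached_def \<rho>0_def by force
    then have "\<rho>0 *v y = 0" if "y \<in> N" for y
      using that unfolding N_def by blast
    moreover have "\<rho>0 *v y = (of_real (1 / (norm x)\<^sup>2) * cinner x y) *s x" for y
      unfolding \<rho>0_def matrix_scaleR_mv outer_mv
      by (simp add: vec_eq_iff vector_scaleR_component scaleR_complex)
    ultimately have "cinner x y = 0" if "y \<in> N" for y
      using that False by simp
    then have "cinner y x = 0" if "y \<in> N" for y
      using that cnj_cinner[of x y] by simp
    then show ?thesis
      unfolding H'_def by blast
  qed (simp add: H'_def)
qed

lemma densities_H'_kernel:
  assumes "\<sigma> \<in> densities H'" "y \<in> N"
  shows "\<sigma> *v y = 0"
proof -
  have "psd \<sigma>"
    using assms unfolding densities_def density_def by auto
  moreover have "\<sigma> *v y \<in> H'"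
    using assms(1) unfolding densities_def supp_def by auto
  then have "Re (cinner y (\<sigma> *v y)) = 0"
    using assms(2) unfolding H'_def by auto
  ultimately show ?thesis
    by (rule psd_null_vector)
qed

lemma densities_H'_dominated:
  assumes "\<sigma> \<in> densities H'"
  obtains \<omega> c where "\<omega> \<in> reached_sums" "psd (c *\<^sub>R \<omega> - \<sigma>)"
proof -
  obtain \<omega> where \<omega>: "\<omega> \<in> reached_sums" "{y. \<omega> *v y = 0} = N"
    using reached_sum_with_kernel_N by blast
  have "psd \<sigma>"
    using assms unfolding densities_def density_def by auto
  moreover have "\<sigma> *v y = 0" if "\<omega> *v y = 0" for y
    using that \<omega>(2) densities_H'_kernel[OF assms] by blast
  ultimately obtain c where "psd (c *\<^sub>R \<omega> - \<sigma>)"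
    using psd_dominated_if_kernel_subset[OF psd_reached_sums[OF \<omega>(1)]] by metis
  with \<omega>(1) show ?thesis
    by (rule that)
qed

lemma lindblad_exp_densities_H':
  assumes "\<sigma> \<in> densities H'" "t \<ge> 0"
  shows "lindblad_exp Ds t \<sigma> \<in> densities H'"
proof -
  obtain \<omega> c where \<omega>: "\<omega> \<in> reached_sums" "psd (c *\<^sub>R \<omega> - \<sigma>)"
    using densities_H'_dominated[OF assms(1)] by blast
  define \<tau> where "\<tau> = lindblad_exp Ds t \<sigma>"
  have \<sigma>: "psd \<sigma>" "trace \<sigma> = 1"
    using assms(1) unfolding densities_def density_def by auto
  have \<tau>: "psd \<tau>"
    unfolding \<tau>_def using \<sigma>(1) assms(2) by (rule psd_lindblad_exp)
  have dom: "psd (c *\<^sub>R lindblad_exp Ds t \<omega> - \<tau>)"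
    using psd_lindblad_exp[OF \<omega>(2) assms(2)]
    unfolding \<tau>_def lindblad_exp_diff lindblad_exp_scaleR .
  have "supp \<tau> \<subseteq> H'"
    unfolding supp_def H'_def
    using psd_dominated_kernel(2)[OF \<tau> dom reached_sums_kernel[OF lindblad_exp_reached_sums[OF \<omega>(1) assms(2)]]]
    by blast
  with \<tau> \<sigma>(2) show ?thesis
    unfolding \<tau>_def densities_def density_def by (simp add: trace_lindblad_exp)
qed

lemma tendsto_lindblad_exp_densities_H':
  assumes pure: "pure_state \<rho>d" and \<sigma>: "\<sigma> \<in> densities H'"
  shows "((\<lambda>t. lindblad_exp Ds t \<sigma>) \<longlongrightarrow> \<rho>d) at_top"
proof -
  obtain \<psi> where \<psi>: "cinner \<psi> \<psi> = 1" "\<rho>d = outer \<psi> \<psi>"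
    using pure unfolding pure_state_def by blast
  obtain \<omega> c where \<omega>: "\<omega> \<in> reached_sums" "psd (c *\<^sub>R \<omega> - \<sigma>)"
    using densities_H'_dominated[OF \<sigma>] by blast
  obtain m where m: "((\<lambda>t. lindblad_exp Ds t \<omega>) \<longlongrightarrow> m *\<^sub>R \<rho>d) at_top"
    using tendsto_lindblad_exp_reached_sums[OF \<omega>(1)] by blast
  have "psd \<sigma>" "trace \<sigma> = 1"
    using \<sigma> unfolding densities_def density_def by auto
  show ?thesis
    unfolding \<psi>(2)
  proof (rule tendsto_outer_if_dominated[OF \<psi>(1)])
    show "\<forall>\<^sub>F t in at_top. psd (lindblad_exp Ds t \<sigma>)"
      using eventually_ge_at_top[of 0] by eventually_elim (rule psd_lindblad_exp[OF \<open>psd \<sigma>\<close>])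
    show "trace (lindblad_exp Ds t \<sigma>) = 1" for t
      by (simp add: trace_lindblad_exp \<open>trace \<sigma> = 1\<close>)
    show "\<forall>\<^sub>F t in at_top. psd (c *\<^sub>R lindblad_exp Ds t \<omega> - lindblad_exp Ds t \<sigma>)"
      using eventually_ge_at_top[of 0] by eventually_elim
        (simp add: psd_lindblad_exp[OF \<omega>(2)] flip: lindblad_exp_scaleR lindblad_exp_diff)
    show "((\<lambda>t. lindblad_exp Ds t \<omega>) \<longlongrightarrow> m *\<^sub>R outer \<psi> \<psi>) at_top"
      using m unfolding \<psi>(2) .
  qed
qed

end

theorem lemma3:
  fixes Ds :: "('n::finite) cmat list" and \<rho>d :: "'n cmat" and H'' :: "(complex^'n) set"
  assumes "csubspace H''"
    and "pure_state \<rho>d"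
    and "cond_asymp_stable (lindblad_D Ds) \<rho>d H''"
  shows "\<exists>H'. csubspace H' \<and> H'' \<subseteq> H' \<and> invariant_densities (lindblad_D Ds) H'
             \<and> cond_asymp_stable (lindblad_D Ds) \<rho>d H'"
proof -
  interpret lindblad_stable Ds H'' \<rho>d
    using assms(1,3) by unfold_locales
  show ?thesis
  proof (intro exI[of _ H'] conjI)
    show "invariant_densities (lindblad_D Ds) H'"
      unfolding invariant_densities_def evol_lindblad_D using lindblad_exp_densities_H' by blast
    show "cond_asymp_stable (lindblad_D Ds) \<rho>d H'"
      unfolding cond_asymp_stable_def evol_lindblad_D
      using tendsto_lindblad_exp_densities_H'[OF assms(2)] by blast
  qed (fact csubspace_H' H''_subset_H')+
qed

end
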